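(* Let $A\in\mathbb{R}^{n\times n}$ be symmetric positive-semidefinite, $b\in\mathbb{R}^n$, $g:\mathbb{R}^n\to(-\infty,\infty]$ proper, lower semicontinuous and convex, and $\gamma>0$ such that $I-\gamma A$ is positive-definite. Set $Q:=(I-\gamma A)^{-1}$, $c:=\gamma Qb$, $P:=Q-I$, and $\psi(u):=\frac12\langle Pu,u\rangle+\langle c,u\rangle+\gamma e_\gamma g(u)$. Then $\psi$ is continuously differentiable and $\psi(u)=\frac12\langle Pu,u\rangle+\langle c,u\rangle+\gamma g(\operatorname{Prox}_{\gamma g}(u))+\frac12\|u-\operatorname{Prox}_{\gamma g}(u)\|^2$. Moreover, $\nabla\psi(u)=Qu-\operatorname{Prox}_{\gamma g}(u)+c$ and $\nabla\psi$ is Lipschitz continuous on $\mathbb{R}^n$ with modulus $\ell:=1+\|Q\|$. If in addition $A$ is positive-definite, then $\psi$ is strongly convex with modulus $\lambda_{\min}(P)>0$.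
   Context: Moreau envelope and proximal map: $e_\gamma g(x):=\inf_y\{g(y)+\frac1{2\gamma}\|y-x\|^2\}$, $\operatorname{Prox}_{\gamma g}(x):=\operatorname{argmin}_y\{g(y)+\frac1{2\gamma}\|y-x\|^2\}$. $\lambda_{\min}(P)$ is the smallest eigenvalue of $P$. *)

theory Defs
  imports "HOL-Analysis.Analysis"
begin

definition proper_fun :: "('a \<Rightarrow> ereal) \<Rightarrow> bool" where
  "proper_fun g \<longleftrightarrow> (\<forall>x. g x \<noteq> -\<infinity>) \<and> (\<exists>x. g x \<noteq> \<infinity>)"

definition lsc_fun :: "('a::topological_space \<Rightarrow> ereal) \<Rightarrow> bool" where
  "lsc_fun g \<longleftrightarrow> (\<forall>x. g x \<le> Liminf (at x) g)"

definition ereal_convex :: "('a::real_vector \<Rightarrow> ereal) \<Rightarrow> bool" where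
  "ereal_convex g \<longleftrightarrow> (\<forall>x y u v. u \<ge> 0 \<longrightarrow> v \<ge> 0 \<longrightarrow> u + v = 1 \<longrightarrow>
      g (u *\<^sub>R x + v *\<^sub>R y) \<le> ereal u * g x + ereal v * g y)"

definition moreau_env :: "real \<Rightarrow> ('a::real_normed_vector \<Rightarrow> ereal) \<Rightarrow> 'a \<Rightarrow> ereal" where
  "moreau_env \<gamma> g x = (INF y. g y + ereal (norm (y - x) ^ 2 / (2 * \<gamma>)))"

definition prox :: "real \<Rightarrow> ('a::real_normed_vector \<Rightarrow> ereal) \<Rightarrow> 'a \<Rightarrow> 'a" where
  "prox \<gamma> g x = (THE y. \<forall>z. g y + ereal (norm (y - x) ^ 2 / (2 * \<gamma>))
                              \<le> g z + ereal (norm (z - x) ^ 2 / (2 * \<gamma>)))"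

definition psd_mat :: "real^'n^'n \<Rightarrow> bool" where
  "psd_mat M \<longleftrightarrow> (\<forall>x. x \<bullet> (M *v x) \<ge> 0)"

definition pd_mat :: "real^'n^'n \<Rightarrow> bool" where
  "pd_mat M \<longleftrightarrow> (\<forall>x. x \<noteq> 0 \<longrightarrow> x \<bullet> (M *v x) > 0)"

definition lambda_min :: "real^'n^'n \<Rightarrow> real" where
  "lambda_min M = Inf {t. \<exists>v. v \<noteq> 0 \<and> M *v v = t *\<^sub>R v}"

definition strongly_convex_on :: "'a::real_inner set \<Rightarrow> ('a \<Rightarrow> real) \<Rightarrow> real \<Rightarrow> bool" where
  "strongly_convex_on S f \<mu> \<longleftrightarrow> convex_on S (\<lambda>x. f x - \<mu> / 2 * norm x ^ 2)"

end

theory Submission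
  imports Defs "HOL-Real_Asymp.Real_Asymp"
begin

(* For fixed u the proximal objective y \<mapsto> g y + |y - u|^2 / (2 gamma) is lower semicontinuous,
   coercive (a proper convex lsc function has a minorant that decreases only linearly in |y|) and
   strictly convex, so it has a unique minimiser Prox u and the envelope e is finite.  Moving from
   Prox u towards any z and letting the step tend to 0 gives the variational inequality
   <Prox u - u, z - Prox u> / gamma + g z >= g (Prox u), hence Prox is nonexpansive.  Comparing the
   envelope at x and y through the minimisers at x and y traps e y - e x - <(x - Prox x) / gamma, y - x>
   between -|y - x|^2 / (2 gamma) and |y - x|^2 / (2 gamma), so e is differentiable with gradient
   (x - Prox x) / gamma; this yields the gradient and its Lipschitz bound for psi = quadratic + gamma e.
   For positive definite A, psi minus lambda_min P |u|^2 / 2 is a positive semidefinite quadratic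
   plus a convex function, and lambda_min P > 0 because P = Q - I is positive definite. *)

section \<open>Lower semicontinuity and existence of minimisers\<close>

lemma lsc_fun_iff_eventually:
  "lsc_fun g \<longleftrightarrow> (\<forall>x c. c < g x \<longrightarrow> eventually (\<lambda>y. c < g y) (at x))"
  by (simp add: lsc_fun_def le_Liminf_iff)

lemma lsc_fun_open_superlevel:
  assumes "lsc_fun g"
  shows "open {y. c < g y}"
  unfolding open_subopen[of "{y. c < g y}"]
proof
  fix x assume "x \<in> {y. c < g y}"
  with assms have "eventually (\<lambda>y. c < g y) (nhds x)"
    by (simp add: lsc_fun_iff_eventually eventually_nhds_conv_at)
  then show "\<exists>T. open T \<and> x \<in> T \<and> T \<subseteq> {y. c < g y}"
    unfolding eventually_nhds by auto
qed

lemma lsc_fun_add_continuous: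
  fixes g :: "'a::t2_space \<Rightarrow> ereal"
  assumes g: "lsc_fun g" "\<And>x. g x \<noteq> -\<infinity>" and q: "\<And>x. isCont q x"
  shows "lsc_fun (\<lambda>y. g y + ereal (q y))"
  unfolding lsc_fun_iff_eventually
proof (intro allI impI)
  fix x c assume c: "c < g x + ereal (q x)"
  show "eventually (\<lambda>y. c < g y + ereal (q y)) (at x)"
  proof (cases c)
    case (real r)
    then have "ereal (r - q x) < g x" using c by (cases "g x") auto
    then obtain d where d: "ereal (r - q x) < ereal d" "ereal d < g x"
      using ereal_dense2 by blast
    have "eventually (\<lambda>y. ereal d < g y) (at x)"
      using g(1) d(2) by (simp add: lsc_fun_iff_eventually)
    moreover have "eventually (\<lambda>y. r - d < q y) (at x)"
      using d(1) by (intro order_tendstoD(1)[OF isContD[OF q]]) simp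
    ultimately show ?thesis
    proof eventually_elim
      case (elim y)
      then show ?case using real by (cases "g y") auto
    qed
  next
    case MInf
    have "c < g y + ereal (q y)" for y using g(2)[of y] MInf by (cases "g y") auto
    then show ?thesis by simp
  qed (use c in simp)
qed

lemma lsc_fun_compact_attains_min:
  fixes h :: "'a::topological_space \<Rightarrow> ereal"
  assumes "lsc_fun h" "compact K" "K \<noteq> {}"
  shows "\<exists>x\<in>K. \<forall>y\<in>K. h x \<le> h y"
proof (rule ccontr)
  assume "\<not> ?thesis"
  then have "K \<subseteq> (\<Union>c\<in>K. {y. h c < h y})" by (auto simp: not_le)
  then obtain C where C: "C \<subseteq> K" "finite C" "K \<subseteq> (\<Union>c\<in>C. {y. h c < h y})"
    using compactE_image[OF assms(2), of K "\<lambda>c. {y. h c < h y}"] lsc_fun_open_superlevel[OF assms(1)]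
    by blast
  with assms(3) have "C \<noteq> {}" by auto
  have "Min (h ` C) \<in> h ` C" using C(2) \<open>C \<noteq> {}\<close> by simp
  then obtain c0 where c0: "c0 \<in> C" "h c0 = Min (h ` C)" by auto
  then obtain c where "c \<in> C" "h c < h c0" using C by blast
  moreover have "Min (h ` C) \<le> h c" using C(2) \<open>c \<in> C\<close> by simp
  ultimately show False using c0(2) by simp
qed

lemma lsc_fun_coercive_attains_min:
  fixes h :: "'a::{real_normed_vector, heine_borel} \<Rightarrow> ereal"
  assumes "lsc_fun h" and "eventually (\<lambda>y. h x0 \<le> h y) at_infinity"
  shows "\<exists>p. \<forall>y. h p \<le> h y"
proof -
  obtain r where r: "\<And>y. r \<le> norm y \<Longrightarrow> h x0 \<le> h y"
    using assms(2) unfolding eventually_at_infinity by blast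
  define K :: "'a set" where "K = cball 0 (max r (norm x0))"
  have "x0 \<in> K" unfolding K_def by simp
  then obtain p where p: "p \<in> K" "\<And>y. y \<in> K \<Longrightarrow> h p \<le> h y"
    using lsc_fun_compact_attains_min[OF assms(1), of K] unfolding K_def by auto
  have "h p \<le> h y" for y
  proof (cases "y \<in> K")
    case False
    then have "r \<le> norm y" unfolding K_def by simp
    then show ?thesis using p(2)[OF \<open>x0 \<in> K\<close>] r by (meson order.trans)
  qed (rule p(2))
  then show ?thesis by blast
qed

lemma le_of_le_add_mult_small:
  fixes a b c :: real
  assumes "\<And>t. 0 < t \<Longrightarrow> t \<le> 1 \<Longrightarrow> a \<le> b + t * c"
  shows "a \<le> b"
proof (rule tendsto_le[OF trivial_limit_at_right_real])
  show "((\<lambda>t. b + t * c) \<longlongrightarrow> b) (at_right 0)"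
    by (auto intro!: tendsto_eq_intros)
  show "eventually (\<lambda>t. a \<le> b + t * c) (at_right 0)"
  proof -
    have "eventually (\<lambda>t. t \<in> {0<..<1}) (at_right (0::real))"
      by (rule eventually_at_right_real) simp
    then show ?thesis by eventually_elim (auto intro: assms)
  qed
qed simp

lemma norm_convex_combination_sq:
  fixes a b x :: "'a::real_inner"
  shows "norm ((1 - t) *\<^sub>R a + t *\<^sub>R b - x)^2
    = (1 - t) * norm (a - x)^2 + t * norm (b - x)^2 - t * (1 - t) * norm (a - b)^2"
  unfolding power2_norm_eq_inner
  by (simp add: inner_add_left inner_add_right inner_diff_left inner_diff_right inner_commute
      algebra_simps)

section \<open>Linear maps and symmetric matrices\<close>

lemma lipschitz_on_bounded_linear:
  assumes "bounded_linear T"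
  shows "lipschitz_on (onorm T) U T"
proof (rule lipschitz_onI)
  show "0 \<le> onorm T" using onorm_pos_le[OF assms] .
  fix x y
  have "dist (T x) (T y) = norm (T (x - y))"
    by (simp add: dist_norm linear_diff[OF bounded_linear.linear[OF assms]])
  also have "\<dots> \<le> onorm T * dist x y" unfolding dist_norm by (rule onorm[OF assms])
  finally show "dist (T x) (T y) \<le> onorm T * dist x y" .
qed

lemma transpose_diff: "transpose (A - B) = transpose A - transpose (B :: 'a::ring_1^'n^'m)"
  by (simp add: transpose_def vec_eq_iff)

lemma inner_matrix_symmetric:
  fixes M :: "real^'n^'n"
  assumes "transpose M = M"
  shows "x \<bullet> (M *v y) = (M *v x) \<bullet> y"
  by (metis assms dot_lmul_matrix transpose_matrix_vector)

lemma quadratic_form_add_scaled: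
  fixes M :: "real^'n^'n"
  assumes "transpose M = M"
  shows "(x + t *\<^sub>R y) \<bullet> (M *v (x + t *\<^sub>R y))
    = x \<bullet> (M *v x) + 2 * t * (y \<bullet> (M *v x)) + t^2 * (y \<bullet> (M *v y))"
  using inner_matrix_symmetric[OF assms, of x y]
  by (simp add: matrix_vector_right_distrib matrix_vector_mult_scaleR inner_add_left
      inner_add_right inner_commute power2_eq_square algebra_simps)

lemma has_derivative_quadratic_form:
  fixes M :: "real^'n^'n"
  assumes "transpose M = M"
  shows "((\<lambda>u. (M *v u) \<bullet> u) has_derivative (\<lambda>h. 2 * ((M *v u) \<bullet> h))) (at u)"
proof -
  have "((\<lambda>u. (M *v u) \<bullet> u) has_derivative (\<lambda>h. (M *v u) \<bullet> h + (M *v h) \<bullet> u)) (at u)"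
    by (intro has_derivative_inner bounded_linear_imp_has_derivative has_derivative_ident) simp
  moreover have "(M *v h) \<bullet> u = (M *v u) \<bullet> h" for h
    using inner_matrix_symmetric[OF assms, of u h] by (simp add: inner_commute)
  ultimately show ?thesis by simp
qed

lemma convex_on_quadratic_form:
  fixes M :: "real^'n^'n"
  assumes "transpose M = M" "psd_mat M"
  shows "convex_on UNIV (\<lambda>x. x \<bullet> (M *v x))"
proof (rule convex_onI)
  fix t :: real and u v :: "real^'n" assume t: "0 < t" "t < 1"
  define d where "d = v - u"
  have "(1 - t) *\<^sub>R u + t *\<^sub>R v = u + t *\<^sub>R d" and "v = u + 1 *\<^sub>R d"
    unfolding d_def by (simp_all add: algebra_simps)
  moreover have "0 \<le> t * (1 - t) * (d \<bullet> (M *v d))"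
    using t assms(2) unfolding psd_mat_def by simp
  ultimately show "((1 - t) *\<^sub>R u + t *\<^sub>R v) \<bullet> (M *v ((1 - t) *\<^sub>R u + t *\<^sub>R v))
      \<le> (1 - t) * (u \<bullet> (M *v u)) + t * (v \<bullet> (M *v v))"
    by (simp only: quadratic_form_add_scaled[OF assms(1)]) (simp add: algebra_simps power2_eq_square)
qed simp

lemma psd_mat_cauchy_schwarz:
  fixes M :: "real^'n^'n"
  assumes "transpose M = M" "psd_mat M"
  shows "(x \<bullet> (M *v y))^2 \<le> (x \<bullet> (M *v x)) * (y \<bullet> (M *v y))"
proof -
  define a m b where "a = x \<bullet> (M *v x)" and "m = y \<bullet> (M *v x)" and "b = y \<bullet> (M *v y)"
  have nonneg: "0 \<le> a + 2 * t * m + t^2 * b" for t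
    using assms(2) quadratic_form_add_scaled[OF assms(1), of x t y]
    unfolding psd_mat_def a_def m_def b_def by metis
  have "m^2 \<le> a * b"
  proof (cases "b = 0")
    case True
    have "m = 0"
    proof (rule ccontr)
      assume "m \<noteq> 0"
      then show False using nonneg[of "- (a + 1) / (2 * m)"] True by (simp add: field_simps)
    qed
    then show ?thesis using True by simp
  next
    case False
    then have "0 < b" using assms(2) unfolding psd_mat_def b_def by (simp add: order_less_le)
    have "0 \<le> a + 2 * (- m / b) * m + (- m / b)^2 * b" by (rule nonneg)
    also have "\<dots> = (a * b - m^2) / b" using \<open>0 < b\<close> by (simp add: field_simps power2_eq_square)
    finally show ?thesis using \<open>0 < b\<close> by (simp add: zero_le_divide_iff)
  qed
  moreover have "x \<bullet> (M *v y) = m"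
    unfolding m_def using inner_matrix_symmetric[OF assms(1), of x y] by (simp add: inner_commute)
  ultimately show ?thesis unfolding a_def b_def by simp
qed

lemma pd_mat_imp_psd_mat: "pd_mat M \<Longrightarrow> psd_mat M"
  unfolding pd_mat_def psd_mat_def by (metis inner_zero_left less_imp_le order.refl)

lemma pd_mat_invertible: "pd_mat M \<Longrightarrow> invertible M"
  unfolding pd_mat_def invertible_left_inverse matrix_left_invertible_ker
  by (metis inner_zero_right less_irrefl)

lemma matrix_inv_right:
  fixes M :: "'a::field^'n^'n"
  assumes "invertible M"
  shows "M ** matrix_inv M = mat 1"
  using someI_ex[OF assms[unfolded invertible_def]] unfolding matrix_inv_def by auto

lemma matrix_inv_symmetric:
  fixes M :: "'a::field^'n^'n"
  assumes "invertible M" "transpose M = M"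
  shows "transpose (matrix_inv M) = matrix_inv M"
proof -
  have left_inv: "transpose (matrix_inv M) ** M = mat 1"
    using matrix_inv_right[OF assms(1)] assms(2) by (metis matrix_transpose_mul transpose_mat)
  have "transpose (matrix_inv M) = transpose (matrix_inv M) ** (M ** matrix_inv M)"
    using matrix_inv_right[OF assms(1)] by simp
  also have "\<dots> = (transpose (matrix_inv M) ** M) ** matrix_inv M" by (simp add: matrix_mul_assoc)
  finally show ?thesis unfolding left_inv by simp
qed

lemma symmetric_resolvent_minus_id:
  fixes A :: "real^'n^'n"
  assumes "transpose A = A" "invertible (mat 1 - \<gamma> *\<^sub>R A)"
  shows "transpose (matrix_inv (mat 1 - \<gamma> *\<^sub>R A) - mat 1) = matrix_inv (mat 1 - \<gamma> *\<^sub>R A) - mat 1"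
proof -
  have "transpose (mat 1 - \<gamma> *\<^sub>R A) = mat 1 - \<gamma> *\<^sub>R A"
    using assms(1) by (simp add: transpose_diff transpose_scalar)
  then show ?thesis using assms(2) by (simp add: transpose_diff matrix_inv_symmetric)
qed

text \<open>The minimum m of the Rayleigh quotient is attained at some unit vector v; the form of
  P - m I is positive semidefinite and vanishes at v, so by Cauchy-Schwarz it annihilates v.\<close>

lemma symmetric_rayleigh_min_eigenvalue:
  fixes P :: "real^'n^'n"
  assumes "transpose P = P"
  obtains v m where "v \<noteq> 0" "P *v v = m *\<^sub>R v" "\<And>x. m * norm x ^ 2 \<le> x \<bullet> (P *v x)"
proof -
  have "continuous_on UNIV (\<lambda>x. P *v x)" by (rule linear_continuous_on) simp
  then have "continuous_on (sphere 0 1) (\<lambda>v. v \<bullet> (P *v v))"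
    by (intro continuous_intros continuous_on_subset[of UNIV]) auto
  moreover have "sphere (0::real^'n) 1 \<noteq> {}" by simp
  ultimately obtain v where "v \<in> sphere 0 1" "\<forall>y\<in>sphere 0 1. v \<bullet> (P *v v) \<le> y \<bullet> (P *v y)"
    using continuous_attains_inf[OF compact_sphere] by blast
  then have v: "norm v = 1" "\<And>y. norm y = 1 \<Longrightarrow> v \<bullet> (P *v v) \<le> y \<bullet> (P *v y)" by auto
  define m where "m = v \<bullet> (P *v v)"
  have low: "m * norm x ^ 2 \<le> x \<bullet> (P *v x)" for x
  proof (cases "x = 0")
    case False
    then have "m \<le> (x /\<^sub>R norm x) \<bullet> (P *v (x /\<^sub>R norm x))"
      unfolding m_def by (intro v(2)) simp
    also have "\<dots> = x \<bullet> (P *v x) / norm x ^ 2"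
      by (simp add: matrix_vector_mult_scaleR power2_eq_square field_simps)
    finally show ?thesis using False by (simp add: field_simps)
  qed simp
  define M where "M = P - m *\<^sub>R mat 1"
  have Mv: "M *v x = P *v x - m *\<^sub>R x" for x
    unfolding M_def by (simp add: matrix_vector_mult_diff_rdistrib scaleR_matrix_vector_assoc[symmetric])
  have quad: "x \<bullet> (M *v x) = x \<bullet> (P *v x) - m * norm x ^ 2" for x
    unfolding Mv by (simp add: inner_diff_right power2_norm_eq_inner)
  have "transpose M = M" unfolding M_def using assms by (simp add: transpose_diff transpose_scalar)
  moreover have "psd_mat M" unfolding psd_mat_def quad using low by simp
  ultimately have "((M *v v) \<bullet> (M *v v))^2 \<le> ((M *v v) \<bullet> (M *v (M *v v))) * (v \<bullet> (M *v v))"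
    by (rule psd_mat_cauchy_schwarz)
  also have "v \<bullet> (M *v v) = 0" unfolding quad m_def using v(1) by simp
  finally have "M *v v = 0" by simp
  then have "P *v v = m *\<^sub>R v" unfolding Mv by simp
  moreover have "v \<noteq> 0" using v(1) by auto
  ultimately show ?thesis using that low by blast
qed

lemma lambda_min_symmetric:
  fixes P :: "real^'n^'n"
  assumes "transpose P = P"
  shows lambda_min_eigenvector: "\<exists>v. v \<noteq> 0 \<and> P *v v = lambda_min P *\<^sub>R v"
    and lambda_min_le_rayleigh: "lambda_min P * norm x ^ 2 \<le> x \<bullet> (P *v x)"
proof -
  obtain v m where v: "v \<noteq> 0" "P *v v = m *\<^sub>R v" and low: "\<And>x. m * norm x ^ 2 \<le> x \<bullet> (P *v x)"
    using symmetric_rayleigh_min_eigenvalue[OF assms] by blast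
  have "lambda_min P = m" unfolding lambda_min_def
  proof (rule cInf_eq_minimum)
    fix t assume "t \<in> {t. \<exists>v. v \<noteq> 0 \<and> P *v v = t *\<^sub>R v}"
    then obtain x where x: "x \<noteq> 0" "P *v x = t *\<^sub>R x" by auto
    have "m * norm x ^ 2 \<le> t * norm x ^ 2" using low[of x] x(2) by (simp add: power2_norm_eq_inner)
    then show "m \<le> t" using x(1) by simp
  qed (use v in auto)
  then show "\<exists>v. v \<noteq> 0 \<and> P *v v = lambda_min P *\<^sub>R v" "lambda_min P * norm x ^ 2 \<le> x \<bullet> (P *v x)"
    using v low by auto
qed

lemma lambda_min_pos:
  fixes P :: "real^'n^'n"
  assumes "transpose P = P" "pd_mat P"
  shows "0 < lambda_min P"
proof -
  obtain v where v: "v \<noteq> 0" "P *v v = lambda_min P *\<^sub>R v"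
    using lambda_min_eigenvector[OF assms(1)] by blast
  then have "0 < lambda_min P * (v \<bullet> v)" using assms(2) unfolding pd_mat_def by force
  moreover have "0 < v \<bullet> v" using v(1) by simp
  ultimately show ?thesis by (rule zero_less_mult_pos2)
qed

lemma strongly_convex_on_quadratic_plus_convex:
  fixes P :: "real^'n^'n"
  assumes "transpose P = P" "\<And>x. \<mu> * norm x ^ 2 \<le> x \<bullet> (P *v x)" "convex_on UNIV f"
  shows "strongly_convex_on UNIV (\<lambda>x. (1/2) * ((P *v x) \<bullet> x) + f x) \<mu>"
proof -
  define M where "M = P - \<mu> *\<^sub>R mat 1"
  have quad: "x \<bullet> (M *v x) = x \<bullet> (P *v x) - \<mu> * norm x ^ 2" for x
    unfolding M_def
    by (simp add: matrix_vector_mult_diff_rdistrib scaleR_matrix_vector_assoc[symmetric]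
        inner_diff_right power2_norm_eq_inner)
  have "transpose M = M" unfolding M_def using assms(1) by (simp add: transpose_diff transpose_scalar)
  moreover have "psd_mat M" unfolding psd_mat_def quad using assms(2) by simp
  ultimately have "convex_on UNIV (\<lambda>x. x \<bullet> (M *v x))" by (rule convex_on_quadratic_form)
  then have "convex_on UNIV (\<lambda>x. (1/2) * (x \<bullet> (M *v x)) + f x)"
    using assms(3) by (intro convex_on_add convex_on_cmul) auto
  moreover have "(\<lambda>x. (1/2) * (x \<bullet> (M *v x)) + f x)
      = (\<lambda>x. (1/2) * ((P *v x) \<bullet> x) + f x - \<mu> / 2 * norm x ^ 2)"
    by (auto simp: quad inner_commute algebra_simps)
  ultimately show ?thesis unfolding strongly_convex_on_def by simp
qed

text \<open>Write M = I - \<gamma> A and y = M^-1 x, so that x = y - \<gamma> A y and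
  <(M^-1 - I) x, x> = \<gamma> (<A y, y> - \<gamma> |A y|^2).  Cauchy-Schwarz for the form of A, applied to
  A y and y, together with positivity of M at A y shows that this is positive.\<close>

lemma pd_mat_resolvent_minus_id:
  fixes A :: "real^'n^'n"
  assumes symA: "transpose A = A" and pdA: "pd_mat A" and "0 < \<gamma>"
    and pdM: "pd_mat (mat 1 - \<gamma> *\<^sub>R A)"
  shows "pd_mat (matrix_inv (mat 1 - \<gamma> *\<^sub>R A) - mat 1)"
  unfolding pd_mat_def
proof (intro allI impI)
  fix x :: "real^'n" assume "x \<noteq> 0"
  define M where "M = mat 1 - \<gamma> *\<^sub>R A"
  have Mv: "M *v z = z - \<gamma> *\<^sub>R (A *v z)" for z
    unfolding M_def by (simp add: matrix_vector_mult_diff_rdistrib scaleR_matrix_vector_assoc[symmetric])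
  define y where "y = matrix_inv M *v x"
  have My: "M *v y = x"
    unfolding y_def using matrix_inv_right[OF pd_mat_invertible[OF pdM[folded M_def]]]
    by (simp add: matrix_vector_mul_assoc)
  define w where "w = A *v y"
  define a s where "a = y \<bullet> w" and "s = w \<bullet> w"
  have "y \<noteq> 0" using My \<open>x \<noteq> 0\<close> by auto
  then have "0 < a" using pdA unfolding pd_mat_def a_def w_def by simp
  then have "w \<noteq> 0" unfolding a_def by auto
  then have "0 < s" unfolding s_def by simp
  have "0 < w \<bullet> (M *v w)" using pdM \<open>w \<noteq> 0\<close> unfolding pd_mat_def M_def by simp
  then have "\<gamma> * (w \<bullet> (A *v w)) < s" unfolding Mv s_def by (simp add: inner_diff_right)
  moreover have "s^2 \<le> (w \<bullet> (A *v w)) * a"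
    using psd_mat_cauchy_schwarz[OF symA pd_mat_imp_psd_mat[OF pdA], of w y]
    unfolding a_def s_def w_def by simp
  ultimately have "\<gamma> * s^2 < s * a"
    using \<open>0 < \<gamma>\<close> \<open>0 < a\<close>
    by (metis mult.assoc mult_le_cancel_left_pos mult_strict_right_mono order.strict_trans1)
  then have "\<gamma> * s < a" using \<open>0 < s\<close> by (simp add: power2_eq_square)
  have "x \<bullet> ((matrix_inv M - mat 1) *v x) = x \<bullet> (y - x)"
    unfolding y_def by (simp add: matrix_vector_mult_diff_rdistrib)
  also have "\<dots> = \<gamma> * (a - \<gamma> * s)"
    unfolding My[symmetric] Mv a_def s_def w_def
    by (simp add: inner_diff_left inner_diff_right algebra_simps inner_commute)
  finally show "0 < x \<bullet> ((matrix_inv (mat 1 - \<gamma> *\<^sub>R A) - mat 1) *v x)"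
    unfolding M_def using \<open>0 < \<gamma>\<close> \<open>\<gamma> * s < a\<close> by simp
qed

section \<open>The proximal map and the Moreau envelope\<close>

definition prox_objective :: "real \<Rightarrow> ('a::real_normed_vector \<Rightarrow> ereal) \<Rightarrow> 'a \<Rightarrow> 'a \<Rightarrow> ereal" where
  "prox_objective \<gamma> g x y = g y + ereal (norm (y - x) ^ 2 / (2 * \<gamma>))"

locale prox_setting =
  fixes g :: "'a::euclidean_space \<Rightarrow> ereal" and \<gamma> :: real
  assumes proper: "proper_fun g" and lsc: "lsc_fun g" and convex: "ereal_convex g"
    and pos: "0 < \<gamma>"
begin

lemma g_not_MInf: "g x \<noteq> -\<infinity>"
  using proper unfolding proper_fun_def by auto

lemma g_convex_real:
  assumes "g x = ereal a" "g y = ereal b" "0 \<le> t" "t \<le> 1"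
  shows "g ((1 - t) *\<^sub>R x + t *\<^sub>R y) \<le> ereal ((1 - t) * a + t * b)"
  using convex[unfolded ereal_convex_def, rule_format, of "1 - t" t x y] assms by simp

text \<open>Take the minimum of g on the unit ball around a point x0 of finite value and propagate it
  outwards along rays from x0 by convexity.\<close>

lemma affine_norm_minorant:
  obtains x0 a k m where "g x0 = ereal a" "0 \<le> k" "\<And>y. ereal (m - k * norm (y - x0)) \<le> g y"
proof -
  obtain x0 where "g x0 \<noteq> \<infinity>" using proper unfolding proper_fun_def by auto
  then obtain a where a: "g x0 = ereal a" using g_not_MInf[of x0] by (cases "g x0") auto
  obtain y0 where "\<forall>y\<in>cball x0 1. g y0 \<le> g y"
    using lsc_fun_compact_attains_min[OF lsc compact_cball, of x0 1] by auto
  then have y0: "\<And>y. y \<in> cball x0 1 \<Longrightarrow> g y0 \<le> g y" by blast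
  then have "g y0 \<le> ereal a" using a y0[of x0] by simp
  then obtain m where m: "g y0 = ereal m" "m \<le> a" using g_not_MInf[of y0] by (cases "g y0") auto
  have "ereal (m - (a - m) * norm (y - x0)) \<le> g y" for y
  proof (cases "norm (y - x0) \<le> 1")
    case True
    then have "g y0 \<le> g y" using y0 by (simp add: dist_norm norm_minus_commute)
    moreover have "ereal (m - (a - m) * norm (y - x0)) \<le> ereal m" using m(2) by simp
    ultimately show ?thesis using m(1) by (metis order.trans)
  next
    case False
    define r where "r = norm (y - x0)"
    define t where "t = 1 / r"
    have "1 < r" using False unfolding r_def by simp
    then have t: "0 \<le> t" "t \<le> 1" "t * r = 1" unfolding t_def by auto
    have "dist x0 ((1 - t) *\<^sub>R x0 + t *\<^sub>R y) = t * r"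
      unfolding dist_norm r_def using t(1)
      by (simp add: algebra_simps norm_minus_commute flip: scaleR_diff_right)
    then have y0_le: "g y0 \<le> g ((1 - t) *\<^sub>R x0 + t *\<^sub>R y)" using t(3) by (intro y0) simp
    show ?thesis
    proof (cases "g y")
      case (real b)
      have "ereal m \<le> ereal ((1 - t) * a + t * b)"
        using y0_le g_convex_real[OF a real t(1,2)] m(1) by (metis order.trans)
      then have "m \<le> (1 - t) * a + t * b" by simp
      then have "r * m \<le> r * ((1 - t) * a + t * b)" using False r_def by (intro mult_left_mono) auto
      also have "\<dots> = r * a - a + b" using t(3) by (simp add: algebra_simps)
      finally have "r * m \<le> r * a - a + b" .
      moreover have "(a - m) * r = r * a - r * m" by (simp add: algebra_simps)
      ultimately show ?thesis using real m(2) unfolding r_def[symmetric] by simp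
    qed (use g_not_MInf in auto)
  qed
  with a m(2) show thesis by (intro that[of x0 a "a - m" m]) auto
qed

lemma prox_objective_lsc: "lsc_fun (prox_objective \<gamma> g x)"
  unfolding prox_objective_def[abs_def]
  by (rule lsc_fun_add_continuous[OF lsc g_not_MInf]) (use pos in \<open>auto intro!: continuous_intros\<close>)

lemma prox_objective_has_min: "\<exists>p. \<forall>y. prox_objective \<gamma> g x p \<le> prox_objective \<gamma> g x y"
proof -
  obtain x0 a k m where a: "g x0 = ereal a" and "0 \<le> k"
    and low: "\<And>y. ereal (m - k * norm (y - x0)) \<le> g y"
    using affine_norm_minorant by blast
  define \<phi> where "\<phi> r = m - k * (r + norm x0) + (r - norm x)^2 / (2 * \<gamma>)" for r
  have \<phi>_le: "ereal (\<phi> (norm y)) \<le> prox_objective \<gamma> g x y" if "norm x \<le> norm y" for y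
  proof -
    have "(norm y - norm x)^2 \<le> norm (y - x)^2"
      using that norm_triangle_ineq2[of y x] by (intro power_mono) auto
    then have "(norm y - norm x)^2 / (2 * \<gamma>) \<le> norm (y - x)^2 / (2 * \<gamma>)"
      using pos by (simp add: divide_right_mono)
    moreover have "k * norm (y - x0) \<le> k * (norm y + norm x0)"
      using \<open>0 \<le> k\<close> norm_triangle_ineq4[of y x0] by (intro mult_left_mono) auto
    ultimately have "ereal (\<phi> (norm y)) \<le> ereal (m - k * norm (y - x0)) + ereal (norm (y - x)^2 / (2 * \<gamma>))"
      unfolding \<phi>_def by simp
    also have "\<dots> \<le> prox_objective \<gamma> g x y"
      unfolding prox_objective_def using low by (rule add_right_mono)
    finally show ?thesis .
  qed
  have "filterlim \<phi> at_top at_top" unfolding \<phi>_def using pos by real_asymp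
  then have "filterlim (\<lambda>y. \<phi> (norm y)) at_top at_infinity"
    by (rule filterlim_compose[OF _ filterlim_norm_at_top])
  then have "eventually (\<lambda>y. a + norm (x0 - x)^2 / (2 * \<gamma>) \<le> \<phi> (norm y)) at_infinity"
    unfolding filterlim_at_top by blast
  moreover have "eventually (\<lambda>y. norm x \<le> norm y) at_infinity"
    unfolding eventually_at_infinity by blast
  ultimately have "eventually (\<lambda>y. prox_objective \<gamma> g x x0 \<le> prox_objective \<gamma> g x y) at_infinity"
  proof eventually_elim
    case (elim y)
    have "prox_objective \<gamma> g x x0 = ereal (a + norm (x0 - x)^2 / (2 * \<gamma>))"
      unfolding prox_objective_def a by simp
    also have "\<dots> \<le> ereal (\<phi> (norm y))" using elim(1) by simp
    also have "\<dots> \<le> prox_objective \<gamma> g x y" using elim(2) by (rule \<phi>_le)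
    finally show ?case .
  qed
  then show ?thesis by (rule lsc_fun_coercive_attains_min[OF prox_objective_lsc])
qed

lemma prox_objective_min_finite:
  assumes "\<forall>z. prox_objective \<gamma> g x p \<le> prox_objective \<gamma> g x z"
  shows "g p = ereal (real_of_ereal (g p))"
proof -
  obtain x0 where "g x0 \<noteq> \<infinity>" using proper unfolding proper_fun_def by auto
  then have "prox_objective \<gamma> g x x0 \<noteq> \<infinity>" unfolding prox_objective_def by simp
  then have "prox_objective \<gamma> g x p \<noteq> \<infinity>" using assms by (metis ereal_infty_less_eq(1))
  then show ?thesis using g_not_MInf[of p] unfolding prox_objective_def by (cases "g p") auto
qed

lemma prox_objective_min_unique:
  assumes p: "\<forall>z. prox_objective \<gamma> g x p \<le> prox_objective \<gamma> g x z"
    and q: "\<forall>z. prox_objective \<gamma> g x q \<le> prox_objective \<gamma> g x z"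
  shows "p = q"
proof -
  define a b where "a = real_of_ereal (g p)" and "b = real_of_ereal (g q)"
  have ga: "g p = ereal a" and gb: "g q = ereal b"
    unfolding a_def b_def using prox_objective_min_finite p q by blast+
  define mid where "mid = (1 - 1/2) *\<^sub>R p + (1/2) *\<^sub>R q"
  have mid_sq: "norm (mid - x)^2 = (norm (p - x)^2 + norm (q - x)^2) / 2 - norm (p - q)^2 / 4"
    using norm_convex_combination_sq[of "1/2" p q x] unfolding mid_def by simp
  have "prox_objective \<gamma> g x p = prox_objective \<gamma> g x q" using p q by (blast intro: order.antisym)
  then have b_eq: "b = a + (norm (p - x)^2 - norm (q - x)^2) / (2 * \<gamma>)"
    unfolding prox_objective_def ga gb using pos by (simp add: field_simps)
  have "prox_objective \<gamma> g x p \<le> prox_objective \<gamma> g x mid" using p by blast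
  also have "\<dots> \<le> ereal ((1 - 1/2) * a + (1/2) * b) + ereal (norm (mid - x)^2 / (2 * \<gamma>))"
    unfolding prox_objective_def
    by (rule add_right_mono) (unfold mid_def, rule g_convex_real[OF ga gb]; simp)
  finally have "a + norm (p - x)^2 / (2 * \<gamma>) \<le> a / 2 + b / 2 + norm (mid - x)^2 / (2 * \<gamma>)"
    unfolding prox_objective_def ga by simp
  also have "\<dots> = a + norm (p - x)^2 / (2 * \<gamma>) - norm (p - q)^2 / (8 * \<gamma>)"
    unfolding mid_sq b_eq using pos by (simp add: field_simps)
  finally have "norm (p - q)^2 / (8 * \<gamma>) \<le> 0" by linarith
  then show ?thesis using pos by (simp add: divide_le_0_iff)
qed

lemma prox_minimizes: "prox_objective \<gamma> g x (prox \<gamma> g x) \<le> prox_objective \<gamma> g x z"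
proof -
  have "\<exists>!p. \<forall>z. prox_objective \<gamma> g x p \<le> prox_objective \<gamma> g x z"
    using prox_objective_has_min prox_objective_min_unique by blast
  from theI'[OF this] show ?thesis unfolding prox_def prox_objective_def by blast
qed

definition g_prox :: "'a \<Rightarrow> real" where
  "g_prox x = real_of_ereal (g (prox \<gamma> g x))"

definition env :: "'a \<Rightarrow> real" where
  "env x = real_of_ereal (moreau_env \<gamma> g x)"

lemma g_prox_finite: "g (prox \<gamma> g x) = ereal (g_prox x)"
  unfolding g_prox_def using prox_objective_min_finite prox_minimizes by blast

lemma moreau_env_eq: "moreau_env \<gamma> g x = ereal (g_prox x + norm (prox \<gamma> g x - x)^2 / (2 * \<gamma>))"
proof -
  have "moreau_env \<gamma> g x = (INF y. prox_objective \<gamma> g x y)"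
    unfolding moreau_env_def prox_objective_def ..
  also have "\<dots> = prox_objective \<gamma> g x (prox \<gamma> g x)"
    using prox_minimizes by (intro order.antisym INF_lower INF_greatest) auto
  finally show ?thesis unfolding prox_objective_def g_prox_finite by simp
qed

lemma env_eq: "env x = g_prox x + norm (prox \<gamma> g x - x)^2 / (2 * \<gamma>)"
  unfolding env_def moreau_env_eq by simp

lemma env_le:
  assumes "g z \<le> ereal b"
  shows "env x \<le> b + norm (z - x)^2 / (2 * \<gamma>)"
proof -
  have "prox_objective \<gamma> g x (prox \<gamma> g x) \<le> prox_objective \<gamma> g x z" by (rule prox_minimizes)
  also have "\<dots> \<le> ereal b + ereal (norm (z - x)^2 / (2 * \<gamma>))"
    unfolding prox_objective_def using assms by (rule add_right_mono)
  finally show ?thesis unfolding env_eq prox_objective_def g_prox_finite by simp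
qed

text \<open>Compare the objective at prox x with its value at (1 - t) prox x + t z and let t tend to 0.\<close>

lemma prox_variational_ineq:
  assumes "g z = ereal b"
  shows "g_prox x \<le> b + (prox \<gamma> g x - x) \<bullet> (z - prox \<gamma> g x) / \<gamma>"
proof -
  define p where "p = prox \<gamma> g x"
  define d where "d = (norm (z - x)^2 - norm (p - x)^2 - norm (p - z)^2) / (2 * \<gamma>)"
  define c where "c = norm (p - z)^2 / (2 * \<gamma>)"
  have "g_prox x \<le> b + d + t * c" if t: "0 < t" "t \<le> 1" for t
  proof -
    define pt where "pt = (1 - t) *\<^sub>R p + t *\<^sub>R z"
    have "prox_objective \<gamma> g x p \<le> prox_objective \<gamma> g x pt"
      unfolding p_def by (rule prox_minimizes)
    also have "\<dots> \<le> ereal ((1 - t) * g_prox x + t * b) + ereal (norm (pt - x)^2 / (2 * \<gamma>))"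
      unfolding prox_objective_def pt_def
      by (rule add_right_mono, rule g_convex_real) (use assms g_prox_finite p_def t in auto)
    finally have "g_prox x + norm (p - x)^2 / (2 * \<gamma>)
        \<le> (1 - t) * g_prox x + t * b + norm (pt - x)^2 / (2 * \<gamma>)"
      unfolding prox_objective_def p_def g_prox_finite by simp
    then have "t * g_prox x \<le> t * b + (norm (pt - x)^2 - norm (p - x)^2) / (2 * \<gamma>)"
      by (simp add: algebra_simps diff_divide_distrib)
    also have "(norm (pt - x)^2 - norm (p - x)^2) / (2 * \<gamma>) = t * (d + t * c)"
      unfolding pt_def norm_convex_combination_sq d_def c_def using pos by (simp add: field_simps)
    finally have "t * g_prox x \<le> t * (b + d + t * c)" by (simp add: algebra_simps)
    then show ?thesis using t by simp
  qed
  then have "g_prox x \<le> b + d" by (rule le_of_le_add_mult_small)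
  moreover have "d = (p - x) \<bullet> (z - p) / \<gamma>"
    unfolding d_def power2_norm_eq_inner using pos
    by (simp add: inner_diff_left inner_diff_right inner_commute field_simps)
  ultimately show ?thesis unfolding p_def by simp
qed

lemma prox_nonexpansive: "norm (prox \<gamma> g x - prox \<gamma> g y) \<le> norm (x - y)"
proof -
  define p q where "p = prox \<gamma> g x" and "q = prox \<gamma> g y"
  have "g_prox x \<le> g_prox y + (p - x) \<bullet> (q - p) / \<gamma>"
    using prox_variational_ineq[OF g_prox_finite[of y]] unfolding p_def q_def .
  moreover have "g_prox y \<le> g_prox x + (q - y) \<bullet> (p - q) / \<gamma>"
    using prox_variational_ineq[OF g_prox_finite[of x]] unfolding p_def q_def .
  ultimately have "0 \<le> ((p - x) \<bullet> (q - p) + (q - y) \<bullet> (p - q)) / \<gamma>"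
    by (simp add: add_divide_distrib)
  then have "0 \<le> (p - x) \<bullet> (q - p) + (q - y) \<bullet> (p - q)"
    using pos by (simp add: zero_le_divide_iff)
  also have "\<dots> = (x - y) \<bullet> (p - q) - norm (p - q)^2"
    unfolding power2_norm_eq_inner by (simp add: inner_diff_left inner_diff_right inner_commute)
  finally have "norm (p - q) * norm (p - q) \<le> norm (x - y) * norm (p - q)"
    using norm_cauchy_schwarz[of "x - y" "p - q"] by (simp add: power2_eq_square)
  then show ?thesis unfolding p_def q_def by (cases "p = q") (auto simp: p_def q_def)
qed

lemma lipschitz_on_prox: "lipschitz_on 1 U (prox \<gamma> g)"
  by (rule lipschitz_onI) (simp_all add: dist_norm prox_nonexpansive)

lemma env_le_linearization:
  "env y \<le> env x + ((x - prox \<gamma> g x) \<bullet> (y - x) + norm (y - x)^2 / 2) / \<gamma>"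
proof -
  define p where "p = prox \<gamma> g x"
  have "env y \<le> g_prox x + norm (p - y)^2 / (2 * \<gamma>)"
    by (rule env_le) (simp add: p_def g_prox_finite)
  also have "norm (p - y)^2 = norm (p - x)^2 + 2 * ((x - p) \<bullet> (y - x)) + norm (y - x)^2"
    unfolding power2_norm_eq_inner by (simp add: inner_diff_left inner_diff_right inner_commute)
  also have "g_prox x + \<dots> / (2 * \<gamma>) = env x + ((x - p) \<bullet> (y - x) + norm (y - x)^2 / 2) / \<gamma>"
    unfolding env_eq p_def[symmetric] using pos by (simp add: field_simps)
  finally show ?thesis unfolding p_def .
qed

text \<open>The upper bound is env_le_linearization; the lower bound is the same inequality with x and
  y exchanged, corrected by the nonexpansiveness of prox.\<close>

lemma env_linearization_error:
  "\<bar>env y - env x - ((x - prox \<gamma> g x) /\<^sub>R \<gamma>) \<bullet> (y - x)\<bar> \<le> norm (y - x)^2 / (2 * \<gamma>)"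
proof -
  define p q where "p = prox \<gamma> g x" and "q = prox \<gamma> g y"
  have "(q - p) \<bullet> (y - x) \<le> norm (y - x)^2"
    using norm_cauchy_schwarz[of "q - p" "y - x"] prox_nonexpansive[of y x]
    unfolding p_def q_def power2_eq_square by (meson mult_right_mono norm_ge_zero order.trans)
  then have "(x - y) \<bullet> (y - q) \<le> - ((x - p) \<bullet> (y - x))"
    unfolding power2_norm_eq_inner by (simp add: inner_diff_left inner_diff_right inner_commute)
  then have "(x - y) \<bullet> (y - q) / \<gamma> \<le> - ((x - p) \<bullet> (y - x)) / \<gamma>"
    using pos by (intro divide_right_mono) auto
  moreover have "env x \<le> env y + (x - y) \<bullet> (y - q) / \<gamma> + norm (y - x)^2 / (2 * \<gamma>)"
    using env_le_linearization[of x y] unfolding q_def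
    by (simp add: add_divide_distrib norm_minus_commute inner_commute)
  ultimately have "env x - env y \<le> - ((x - p) \<bullet> (y - x)) / \<gamma> + norm (y - x)^2 / (2 * \<gamma>)"
    by linarith
  moreover have "env y - env x \<le> (x - p) \<bullet> (y - x) / \<gamma> + norm (y - x)^2 / (2 * \<gamma>)"
    using env_le_linearization[of y x] unfolding p_def by (simp add: add_divide_distrib)
  moreover have "((x - p) /\<^sub>R \<gamma>) \<bullet> (y - x) = (x - p) \<bullet> (y - x) / \<gamma>"
    by (simp add: divide_inverse mult.commute)
  ultimately show ?thesis unfolding p_def by (simp only: abs_le_iff) linarith
qed

lemma env_has_derivative: "(env has_derivative (\<lambda>h. ((x - prox \<gamma> g x) /\<^sub>R \<gamma>) \<bullet> h)) (at x)"
  unfolding has_derivative_iff_norm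
proof (intro conjI bounded_linear_inner_right)
  let ?D = "(x - prox \<gamma> g x) /\<^sub>R \<gamma>"
  have bound: "norm (norm (env y - env x - ?D \<bullet> (y - x)) / norm (y - x)) \<le> norm (y - x) / (2 * \<gamma>)"
    for y
  proof (cases "y = x")
    case False
    have "norm (norm (env y - env x - ?D \<bullet> (y - x)) / norm (y - x))
        = \<bar>env y - env x - ?D \<bullet> (y - x)\<bar> / norm (y - x)" by simp
    also have "\<dots> \<le> (norm (y - x) / (2 * \<gamma>) * norm (y - x)) / norm (y - x)"
      using env_linearization_error[of y x]
      by (intro divide_right_mono) (simp_all add: power2_eq_square)
    also have "\<dots> = norm (y - x) / (2 * \<gamma>)" using False by simp
    finally show ?thesis .
  qed (use pos in simp)
  have "((\<lambda>y. norm (y - x) / (2 * \<gamma>)) \<longlongrightarrow> norm (x - x) / (2 * \<gamma>)) (at x)"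
    using pos by (intro tendsto_intros) simp
  then have lim: "((\<lambda>y. norm (y - x) / (2 * \<gamma>)) \<longlongrightarrow> 0) (at x)" by simp
  show "((\<lambda>y. norm (env y - env x - ?D \<bullet> (y - x)) / norm (y - x)) \<longlongrightarrow> 0) (at x)"
    by (rule Lim_null_comparison[OF always_eventually[OF allI[OF bound]] lim])
qed

lemma env_convex: "convex_on UNIV env"
proof (rule convex_onI)
  fix t :: real and u v :: 'a assume t: "0 < t" "t < 1"
  define a b where "a = prox \<gamma> g u - u" and "b = prox \<gamma> g v - v"
  define z where "z = (1 - t) *\<^sub>R prox \<gamma> g u + t *\<^sub>R prox \<gamma> g v"
  have "g z \<le> ereal ((1 - t) * g_prox u + t * g_prox v)"
    unfolding z_def by (rule g_convex_real) (use g_prox_finite t in auto)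
  then have "env ((1 - t) *\<^sub>R u + t *\<^sub>R v)
      \<le> (1 - t) * g_prox u + t * g_prox v + norm (z - ((1 - t) *\<^sub>R u + t *\<^sub>R v))^2 / (2 * \<gamma>)"
    by (rule env_le)
  also have "z - ((1 - t) *\<^sub>R u + t *\<^sub>R v) = (1 - t) *\<^sub>R a + t *\<^sub>R b - 0"
    unfolding z_def a_def b_def by (simp add: algebra_simps)
  also have "norm \<dots> ^ 2 \<le> (1 - t) * norm a ^ 2 + t * norm b ^ 2"
    unfolding norm_convex_combination_sq using t by simp
  also have "(1 - t) * g_prox u + t * g_prox v + \<dots> / (2 * \<gamma>) = (1 - t) * env u + t * env v"
    unfolding env_eq a_def b_def using pos by (simp add: field_simps)
  finally show "env ((1 - t) *\<^sub>R u + t *\<^sub>R v) \<le> (1 - t) * env u + t * env v"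
    using pos by (simp add: divide_right_mono)
qed auto

end

locale prox_quadratic = prox_setting g \<gamma> for g :: "real^'n \<Rightarrow> ereal" and \<gamma> +
  fixes P :: "real^'n^'n" and c :: "real^'n"
  assumes symmetric: "transpose P = P"
begin

definition \<Psi> :: "real^'n \<Rightarrow> real" where
  "\<Psi> u = (1/2) * ((P *v u) \<bullet> u) + c \<bullet> u + \<gamma> * env u"

lemma \<Psi>_eq: "ereal (\<Psi> u) = ereal ((1/2) * ((P *v u) \<bullet> u) + c \<bullet> u)
    + ereal \<gamma> * g (prox \<gamma> g u) + ereal ((1/2) * norm (u - prox \<gamma> g u) ^ 2)"
  unfolding \<Psi>_def g_prox_finite env_eq using pos by (simp add: field_simps norm_minus_commute)

lemma \<Psi>_has_derivative: "(\<Psi> has_derivative (\<lambda>h. (P *v u + u - prox \<gamma> g u + c) \<bullet> h)) (at u)"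
proof -
  have "((\<lambda>u. (1/2) * ((P *v u) \<bullet> u) + c \<bullet> u + \<gamma> * env u) has_derivative
      (\<lambda>h. (1/2) * (2 * ((P *v u) \<bullet> h)) + c \<bullet> h + \<gamma> * (((u - prox \<gamma> g u) /\<^sub>R \<gamma>) \<bullet> h))) (at u)"
    by (intro has_derivative_add has_derivative_mult_right has_derivative_quadratic_form[OF symmetric]
        has_derivative_inner_right has_derivative_ident env_has_derivative)
  then show ?thesis unfolding \<Psi>_def[abs_def]
    by (rule has_derivative_eq_rhs)
      (use pos in \<open>simp add: fun_eq_iff inner_add_left inner_diff_left inverse_eq_divide\<close>)
qed

lemma \<Psi>_strongly_convex: "strongly_convex_on UNIV \<Psi> (lambda_min P)"
proof -
  have "convex_on UNIV (\<lambda>u. c \<bullet> u + \<gamma> * env u)"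
    using env_convex pos
    by (intro convex_on_add convex_on_cmul) (auto intro: convex_onI simp: inner_add_right)
  then have "strongly_convex_on UNIV (\<lambda>u. (1/2) * ((P *v u) \<bullet> u) + (c \<bullet> u + \<gamma> * env u)) (lambda_min P)"
    by (rule strongly_convex_on_quadratic_plus_convex[OF symmetric lambda_min_le_rayleigh[OF symmetric]])
  then show ?thesis unfolding \<Psi>_def[abs_def] by (simp add: add.assoc)
qed

end

theorem lemma5p7:
  fixes A :: "real^'n^'n" and b :: "real^'n" and g :: "real^'n \<Rightarrow> ereal" and \<gamma> :: real
    and Q P :: "real^'n^'n" and c :: "real^'n" and \<psi> :: "real^'n \<Rightarrow> real"
    and grad :: "real^'n \<Rightarrow> real^'n" and L :: real
  assumes symA: "transpose A = A" and psdA: "psd_mat A"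
    and proper: "proper_fun g" and lsc: "lsc_fun g" and cvx: "ereal_convex g"
    and gpos: "\<gamma> > 0" and pdI: "pd_mat (mat 1 - \<gamma> *\<^sub>R A)"
    and Q_def: "Q = matrix_inv (mat 1 - \<gamma> *\<^sub>R A)"
    and c_def: "c = \<gamma> *\<^sub>R (Q *v b)"
    and P_def: "P = Q - mat 1"
    and psi_def: "\<And>u. \<psi> u = (1/2) * ((P *v u) \<bullet> u) + c \<bullet> u + \<gamma> * real_of_ereal (moreau_env \<gamma> g u)"
    and grad_def: "\<And>u. grad u = Q *v u - prox \<gamma> g u + c"
    and ell_def: "L = 1 + onorm (\<lambda>x. Q *v x)"
  shows "(\<forall>u. moreau_env \<gamma> g u \<noteq> \<infinity> \<and> moreau_env \<gamma> g u \<noteq> -\<infinity>)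
    \<and> (\<forall>u. ereal (\<psi> u) = ereal ((1/2) * ((P *v u) \<bullet> u) + c \<bullet> u)
              + ereal \<gamma> * g (prox \<gamma> g u) + ereal ((1/2) * norm (u - prox \<gamma> g u) ^ 2))
    \<and> (\<forall>u. (\<psi> has_derivative (\<lambda>h. grad u \<bullet> h)) (at u))
    \<and> continuous_on UNIV grad
    \<and> lipschitz_on L UNIV grad
    \<and> (pd_mat A \<longrightarrow> lambda_min P > 0 \<and> strongly_convex_on UNIV \<psi> (lambda_min P))"
proof -
  interpret prox_quadratic g \<gamma> P c
    using proper lsc cvx gpos symmetric_resolvent_minus_id[OF symA pd_mat_invertible[OF pdI]]
    unfolding P_def Q_def by unfold_locales
  have psi: "\<psi> = \<Psi>" by (auto simp: psi_def \<Psi>_def env_def)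
  have Qv: "Q *v u = P *v u + u" for u unfolding P_def by (simp add: matrix_vector_mult_diff_rdistrib)
  have grad: "grad u = P *v u + u - prox \<gamma> g u + c" for u by (simp add: grad_def Qv)
  have "lipschitz_on (onorm (\<lambda>x. Q *v x) + 1 + 0) UNIV grad"
    unfolding grad_def[abs_def]
    by (intro lipschitz_on_add lipschitz_on_diff lipschitz_on_bounded_linear lipschitz_on_prox
        lipschitz_on_constant) simp
  then have lip: "lipschitz_on L UNIV grad" unfolding ell_def by (simp add: add.commute)
  have "0 < lambda_min P" if "pd_mat A"
    using lambda_min_pos[OF symmetric] pd_mat_resolvent_minus_id[OF symA that gpos pdI]
    unfolding P_def Q_def by blast
  then show ?thesis
    using moreau_env_eq \<Psi>_eq \<Psi>_has_derivative \<Psi>_strongly_convex lip lipschitz_on_continuous_on[OF lip]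
    unfolding psi grad by simp
qed

end
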